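(* Let $\mathcal{A}$ be an alternative $W^{*}$-factor, $\mathcal{B}$ an alternative complex $\ast$-algebra, and $\Phi:\mathcal{A}\to\mathcal{B}$ a bijection preserving product $ab+ba^{*}$ (resp. $ab-ba^{*}$). Let $p_{1}\in\mathcal{A}$ be a projection with $p_{1}\neq 1_{\mathcal{A}}$, $p_{2}=1_{\mathcal{A}}-p_{1}$, and $\mathcal{A}_{ij}=p_{i}\mathcal{A}p_{j}$. Then for all $a_{11}\in\mathcal{A}_{11}$, $b_{12}\in\mathcal{A}_{12}$, $c_{21}\in\mathcal{A}_{21}$, $d_{22}\in\mathcal{A}_{22}$: (i) $\Phi(a_{11}+b_{12}+c_{21})=\Phi(a_{11})+\Phi(b_{12})+\Phi(c_{21})$; (ii) $\Phi(b_{12}+c_{21}+d_{22})=\Phi(b_{12})+\Phi(c_{21})+\Phi(d_{22})$.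
   Context: An alternative $W^{*}$-factor is a prime alternative $C^{*}$-algebra (complete normed alternative complex $\ast$-algebra with $\|a^{*}a\|=\|a\|^{2}$) that is a dual Banach space; it is unital. A projection is a nonzero self-adjoint idempotent. $\mathcal{A}_{ij}$ are the Peirce components with respect to $p_{1}$. $\Phi$ preserves product $ab+ba^{*}$ (resp. $ab-ba^{*}$) if $\Phi(ab+ba^{*})=\Phi(a)\Phi(b)+\Phi(b)\Phi(a)^{*}$ (resp. $\Phi(ab-ba^{*})=\Phi(a)\Phi(b)-\Phi(b)\Phi(a)^{*}$) for all $a,b\in\mathcal{A}$. *)

theory Defs
  imports Complex_Main
begin

definition cvs :: "(complex \<Rightarrow> 'a::ab_group_add \<Rightarrow> 'a) \<Rightarrow> bool" where
  "cvs smul \<longleftrightarrow>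
     (\<forall>c x y. smul c (x + y) = smul c x + smul c y) \<and>
     (\<forall>c d x. smul (c + d) x = smul c x + smul d x) \<and>
     (\<forall>c d x. smul c (smul d x) = smul (c * d) x) \<and>
     (\<forall>x. smul 1 x = x)"

definition alt_star_alg ::
  "(complex \<Rightarrow> 'a::ab_group_add \<Rightarrow> 'a) \<Rightarrow> ('a \<Rightarrow> 'a \<Rightarrow> 'a) \<Rightarrow> ('a \<Rightarrow> 'a) \<Rightarrow> bool" where
  "alt_star_alg smul mult star \<longleftrightarrow>
     cvs smul \<and>
     (\<forall>x y z. mult (x + y) z = mult x z + mult y z) \<and>
     (\<forall>x y z. mult x (y + z) = mult x y + mult x z) \<and>
     (\<forall>c x y. mult (smul c x) y = smul c (mult x y)) \<and>
     (\<forall>c x y. mult x (smul c y) = smul c (mult x y)) \<and>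
     (\<forall>x y. mult (mult x x) y = mult x (mult x y)) \<and>
     (\<forall>x y. mult (mult y x) x = mult y (mult x x)) \<and>
     (\<forall>x y. star (x + y) = star x + star y) \<and>
     (\<forall>c x. star (smul c x) = smul (cnj c) (star x)) \<and>
     (\<forall>x. star (star x) = x) \<and>
     (\<forall>x y. star (mult x y) = mult (star y) (star x))"

text \<open>The norm and completeness come from the type class \<open>banach\<close>; the complex scalar
  multiplication extends the real one.\<close>
definition alt_Cstar_alg ::
  "(complex \<Rightarrow> 'a::banach \<Rightarrow> 'a) \<Rightarrow> ('a \<Rightarrow> 'a \<Rightarrow> 'a) \<Rightarrow> ('a \<Rightarrow> 'a) \<Rightarrow> bool" where
  "alt_Cstar_alg smul mult star \<longleftrightarrow>
     alt_star_alg smul mult star \<and>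
     (\<forall>r x. smul (complex_of_real r) x = scaleR r x) \<and>
     (\<forall>c x. norm (smul c x) = cmod c * norm x) \<and>
     (\<forall>x y. norm (mult x y) \<le> norm x * norm y) \<and>
     (\<forall>x. norm (mult (star x) x) = (norm x)\<^sup>2)"

definition is_ideal ::
  "(complex \<Rightarrow> 'a::ab_group_add \<Rightarrow> 'a) \<Rightarrow> ('a \<Rightarrow> 'a \<Rightarrow> 'a) \<Rightarrow> 'a set \<Rightarrow> bool" where
  "is_ideal smul mult I \<longleftrightarrow>
     0 \<in> I \<and> (\<forall>x\<in>I. \<forall>y\<in>I. x + y \<in> I) \<and> (\<forall>c. \<forall>x\<in>I. smul c x \<in> I) \<and>
     (\<forall>a. \<forall>x\<in>I. mult a x \<in> I \<and> mult x a \<in> I)"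

definition prime_alg ::
  "(complex \<Rightarrow> 'a::ab_group_add \<Rightarrow> 'a) \<Rightarrow> ('a \<Rightarrow> 'a \<Rightarrow> 'a) \<Rightarrow> bool" where
  "prime_alg smul mult \<longleftrightarrow>
     (\<forall>I J. is_ideal smul mult I \<and> is_ideal smul mult J \<and>
            (\<forall>x\<in>I. \<forall>y\<in>J. mult x y = 0) \<longrightarrow> I = {0} \<or> J = {0})"

definition clinear_fun :: "(complex \<Rightarrow> 'a::ab_group_add \<Rightarrow> 'a) \<Rightarrow> ('a \<Rightarrow> complex) \<Rightarrow> bool" where
  "clinear_fun smul f \<longleftrightarrow> (\<forall>x y. f (x + y) = f x + f y) \<and> (\<forall>c x. f (smul c x) = c * f x)"

definition bounded_fun :: "('a::real_normed_vector \<Rightarrow> complex) \<Rightarrow> bool" where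
  "bounded_fun f \<longleftrightarrow> (\<exists>K. \<forall>x. cmod (f x) \<le> K * norm x)"

definition fnorm :: "('a::real_normed_vector \<Rightarrow> complex) \<Rightarrow> real" where
  "fnorm f = Sup {cmod (f x) | x. norm x \<le> 1}"

definition cdual :: "(complex \<Rightarrow> 'a::real_normed_vector \<Rightarrow> 'a) \<Rightarrow> ('a \<Rightarrow> complex) set" where
  "cdual smul = {f. clinear_fun smul f \<and> bounded_fun f}"

text \<open>A is a dual Banach space: there is a complex subspace F of the dual A' (a copy of the
  predual) such that the canonical map a \<mapsto> (f \<mapsto> f a) is an isometric isomorphism of A onto
  the Banach dual of F (bounded linear functionals on F w.r.t. the functional norm).\<close>
definition dual_banach :: "(complex \<Rightarrow> 'a::real_normed_vector \<Rightarrow> 'a) \<Rightarrow> bool" where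
  "dual_banach smul \<longleftrightarrow>
     (\<exists>F. F \<subseteq> cdual smul \<and> (\<lambda>x. 0) \<in> F \<and>
          (\<forall>f\<in>F. \<forall>g\<in>F. (\<lambda>x. f x + g x) \<in> F) \<and>
          (\<forall>c. \<forall>f\<in>F. (\<lambda>x. c * f x) \<in> F) \<and>
          (\<forall>a. norm a = Sup {cmod (f a) | f. f \<in> F \<and> fnorm f \<le> 1}) \<and>
          (\<forall>\<phi> :: ('a \<Rightarrow> complex) \<Rightarrow> complex.
              (\<forall>f\<in>F. \<forall>g\<in>F. \<phi> (\<lambda>x. f x + g x) = \<phi> f + \<phi> g) \<and>
              (\<forall>c. \<forall>f\<in>F. \<phi> (\<lambda>x. c * f x) = c * \<phi> f) \<and>
              (\<exists>K. \<forall>f\<in>F. cmod (\<phi> f) \<le> K * fnorm f)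
              \<longrightarrow> (\<exists>a. \<forall>f\<in>F. \<phi> f = f a)))"

definition is_unit :: "('a \<Rightarrow> 'a \<Rightarrow> 'a) \<Rightarrow> 'a \<Rightarrow> bool" where
  "is_unit mult e \<longleftrightarrow> (\<forall>x. mult e x = x \<and> mult x e = x)"

definition alt_Wstar_factor ::
  "(complex \<Rightarrow> 'a::banach \<Rightarrow> 'a) \<Rightarrow> ('a \<Rightarrow> 'a \<Rightarrow> 'a) \<Rightarrow> ('a \<Rightarrow> 'a) \<Rightarrow> 'a \<Rightarrow> bool" where
  "alt_Wstar_factor smul mult star one \<longleftrightarrow>
     alt_Cstar_alg smul mult star \<and> prime_alg smul mult \<and> dual_banach smul \<and> is_unit mult one"

definition is_projection :: "('a::zero \<Rightarrow> 'a \<Rightarrow> 'a) \<Rightarrow> ('a \<Rightarrow> 'a) \<Rightarrow> 'a \<Rightarrow> bool" where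
  "is_projection mult star p \<longleftrightarrow> p \<noteq> 0 \<and> star p = p \<and> mult p p = p"

definition peirce :: "('a \<Rightarrow> 'a \<Rightarrow> 'a) \<Rightarrow> 'a \<Rightarrow> 'a \<Rightarrow> 'a set" where
  "peirce mult p q = {mult (mult p x) q | x. True}"

definition preserves_plus ::
  "('a::plus \<Rightarrow> 'a \<Rightarrow> 'a) \<Rightarrow> ('a \<Rightarrow> 'a) \<Rightarrow> ('b::plus \<Rightarrow> 'b \<Rightarrow> 'b) \<Rightarrow> ('b \<Rightarrow> 'b) \<Rightarrow> ('a \<Rightarrow> 'b) \<Rightarrow> bool" where
  "preserves_plus multA starA multB starB \<Phi> \<longleftrightarrow>
     (\<forall>a b. \<Phi> (multA a b + multA b (starA a)) = multB (\<Phi> a) (\<Phi> b) + multB (\<Phi> b) (starB (\<Phi> a)))"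

definition preserves_minus ::
  "('a::minus \<Rightarrow> 'a \<Rightarrow> 'a) \<Rightarrow> ('a \<Rightarrow> 'a) \<Rightarrow> ('b::minus \<Rightarrow> 'b \<Rightarrow> 'b) \<Rightarrow> ('b \<Rightarrow> 'b) \<Rightarrow> ('a \<Rightarrow> 'b) \<Rightarrow> bool" where
  "preserves_minus multA starA multB starB \<Phi> \<longleftrightarrow>
     (\<forall>a b. \<Phi> (multA a b - multA b (starA a)) = multB (\<Phi> a) (\<Phi> b) - multB (\<Phi> b) (starB (\<Phi> a)))"

end

theory Submission
  imports Defs
begin

text \<open>Write \<open>x \<circ> y = xy \<plusminus> yx\<^sup>*\<close>. If \<open>\<Phi> t = \<Phi> a + \<Phi> b + \<Phi> c\<close>, then \<open>\<Phi> (x \<circ> t) = \<Phi> (x \<circ> a) +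
  \<Phi> (x \<circ> b) + \<Phi> (x \<circ> c)\<close> and similarly on the right, so by injectivity \<open>t\<close> is pinned down by
  the products \<open>x \<circ> t\<close>. Taking \<open>x = p\<^sub>1 - p\<^sub>2\<close> (or \<open>i(p\<^sub>1 - p\<^sub>2)\<close> for the minus product), whose
  product with \<open>y\<close> is a nonzero multiple of \<open>y\<^sub>1\<^sub>1 - y\<^sub>2\<^sub>2\<close>, determines the diagonal Peirce
  components of \<open>t\<close>; products with \<open>p\<^sub>1\<close> and \<open>p\<^sub>2\<close> determine the off-diagonal ones.\<close>

definition signed :: "bool \<Rightarrow> 'a::ab_group_add \<Rightarrow> 'a" where
  "signed s x = (if s then x else - x)"

definition star_prod :: "('a::ab_group_add \<Rightarrow> 'a \<Rightarrow> 'a) \<Rightarrow> ('a \<Rightarrow> 'a) \<Rightarrow> bool \<Rightarrow> 'a \<Rightarrow> 'a \<Rightarrow> 'a" where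
  "star_prod m st s x y = m x y + signed s (m y (st x))"

lemma signed_add: "signed s (x + y) = signed s x + signed s y"
  by (simp add: signed_def)

lemma signed_zero [simp]: "signed s 0 = 0"
  by (simp add: signed_def)

lemma signed_eq_iff [simp]: "signed s x = signed s y \<longleftrightarrow> x = y"
  by (simp add: signed_def)

lemma preserves_plus_iff_star_prod:
  "preserves_plus mA stA mB stB \<Phi> \<longleftrightarrow>
     (\<forall>a b. \<Phi> (star_prod mA stA True a b) = star_prod mB stB True (\<Phi> a) (\<Phi> b))"
  by (simp add: preserves_plus_def star_prod_def signed_def)

lemma preserves_minus_iff_star_prod:
  "preserves_minus mA stA mB stB \<Phi> \<longleftrightarrow>
     (\<forall>a b. \<Phi> (star_prod mA stA False a b) = star_prod mB stB False (\<Phi> a) (\<Phi> b))"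
  by (simp add: preserves_minus_def star_prod_def signed_def)

locale alt_star_algebra =
  fixes smul :: "complex \<Rightarrow> 'a::ab_group_add \<Rightarrow> 'a" and m :: "'a \<Rightarrow> 'a \<Rightarrow> 'a" and st :: "'a \<Rightarrow> 'a"
  assumes alt_star_alg: "alt_star_alg smul m st"
begin

lemma mult_add_left: "m (x + y) z = m x z + m y z"
  using alt_star_alg by (simp add: alt_star_alg_def)
lemma mult_add_right: "m x (y + z) = m x y + m x z"
  using alt_star_alg by (simp add: alt_star_alg_def)
lemma mult_scale_left: "m (smul c x) y = smul c (m x y)"
  using alt_star_alg by (simp add: alt_star_alg_def)
lemma mult_scale_right: "m x (smul c y) = smul c (m x y)"
  using alt_star_alg by (simp add: alt_star_alg_def)
lemma left_alternative: "m (m x x) y = m x (m x y)"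
  using alt_star_alg by (simp add: alt_star_alg_def)
lemma right_alternative: "m (m y x) x = m y (m x x)"
  using alt_star_alg by (simp add: alt_star_alg_def)
lemma star_add: "st (x + y) = st x + st y"
  using alt_star_alg by (simp add: alt_star_alg_def)
lemma star_scale: "st (smul c x) = smul (cnj c) (st x)"
  using alt_star_alg by (simp add: alt_star_alg_def)
lemma star_star: "st (st x) = x"
  using alt_star_alg by (simp add: alt_star_alg_def)
lemma star_mult: "st (m x y) = m (st y) (st x)"
  using alt_star_alg by (simp add: alt_star_alg_def)
lemma scale_add_right: "smul c (x + y) = smul c x + smul c y"
  using alt_star_alg by (simp add: alt_star_alg_def cvs_def)
lemma scale_add_left: "smul (c + d) x = smul c x + smul d x"
  using alt_star_alg by (simp add: alt_star_alg_def cvs_def)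
lemma scale_scale: "smul c (smul d x) = smul (c * d) x"
  using alt_star_alg by (simp add: alt_star_alg_def cvs_def)
lemma scale_one: "smul 1 x = x"
  using alt_star_alg by (simp add: alt_star_alg_def cvs_def)

lemma mult_zero_left [simp]: "m 0 x = 0"
  using mult_add_left[of 0 0 x] by simp
lemma mult_zero_right [simp]: "m x 0 = 0"
  using mult_add_right[of x 0 0] by simp
lemma mult_minus_left: "m (- x) y = - m x y"
  using mult_add_left[of "- x" x y] by (simp add: eq_neg_iff_add_eq_0)
lemma mult_minus_right: "m x (- y) = - m x y"
  using mult_add_right[of x "- y" y] by (simp add: eq_neg_iff_add_eq_0)
lemma mult_diff_left: "m (x - y) z = m x z - m y z"
  by (simp only: diff_conv_add_uminus mult_add_left mult_minus_left)
lemma mult_diff_right: "m x (y - z) = m x y - m x z"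
  by (simp only: diff_conv_add_uminus mult_add_right mult_minus_right)
lemma star_zero [simp]: "st 0 = 0"
  using star_add[of 0 0] by simp
lemma star_minus: "st (- x) = - st x"
  using star_add[of "- x" x] by (simp add: eq_neg_iff_add_eq_0)
lemma star_diff: "st (x - y) = st x - st y"
  by (simp only: diff_conv_add_uminus star_add star_minus)
lemma scale_zero_right [simp]: "smul c 0 = 0"
  using scale_add_right[of c 0 0] by simp
lemma scale_zero_left [simp]: "smul 0 x = 0"
  using scale_add_left[of 0 0 x] by simp
lemma scale_minus_left: "smul (- c) x = - smul c x"
  using scale_add_left[of "- c" c x] by (simp add: eq_neg_iff_add_eq_0)

lemma scale_cancel:
  assumes "c \<noteq> 0" and "smul c x = smul c y" shows "x = y"
proof -
  have "smul (1/c) (smul c x) = smul (1/c) (smul c y)"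
    using assms(2) by simp
  then show ?thesis
    using assms(1) by (simp add: scale_scale scale_one)
qed

lemma double_cancel:
  fixes x y :: 'a
  assumes "x + x = y + y" shows "x = y"
proof -
  have half: "z = smul (1/2) (z + z)" for z
    using scale_add_left[of "1/2" "1/2" z] by (simp add: scale_add_right scale_one)
  show ?thesis
    using half[of x] half[of y] assms by simp
qed

lemma flexible: "m (m x y) x = m x (m y x)"
proof -
  have "m (m x (y + x)) (y + x) = m x (m (y + x) (y + x))"
    by (rule right_alternative)
  then have "m (m x y) y + m (m x y) x + (m (m x x) y + m (m x x) x)
           = m x (m y y) + m x (m y x) + (m x (m x y) + m x (m x x))"
    by (simp add: mult_add_left mult_add_right add_ac)
  then show ?thesis
    by (simp add: left_alternative right_alternative)
qed

lemma peirce_signed: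
  assumes "x \<in> peirce m u v" shows "signed s x \<in> peirce m u v"
proof -
  obtain y where "x = m (m u y) v"
    using assms by (auto simp: peirce_def)
  then have "signed s x = m (m u (signed s y)) v"
    by (simp add: signed_def mult_minus_left mult_minus_right)
  then show ?thesis
    by (auto simp: peirce_def)
qed

lemma star_prod_add_left: "star_prod m st s (x + y) z = star_prod m st s x z + star_prod m st s y z"
  by (simp add: star_prod_def mult_add_left mult_add_right star_add signed_add algebra_simps)
lemma star_prod_add_right: "star_prod m st s x (y + z) = star_prod m st s x y + star_prod m st s x z"
  by (simp add: star_prod_def mult_add_left mult_add_right signed_add algebra_simps)
lemma star_prod_zero_left [simp]: "star_prod m st s 0 y = 0"
  by (simp add: star_prod_def)
lemma star_prod_zero_right [simp]: "star_prod m st s x 0 = 0"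
  by (simp add: star_prod_def)

end

locale peirce_decomp = alt_star_algebra +
  fixes one p :: "'a::ab_group_add"
  assumes unit_left: "m one x = x" and unit_right: "m x one = x"
    and star_p: "st p = p" and p_idem: "m p p = p"
begin

lemma star_one: "st one = one"
  by (metis star_mult star_star unit_left)

text \<open>Peirce indices \<open>1, 2\<close> are encoded as \<open>True, False\<close>.\<close>

definition proj :: "bool \<Rightarrow> 'a" where
  "proj i = (if i then p else one - p)"

definition comp :: "bool \<Rightarrow> bool \<Rightarrow> 'a \<Rightarrow> 'a" where
  "comp i j x = m (m (proj i) x) (proj j)"

lemma proj_True: "proj True = p" and proj_False: "proj False = one - p"
  by (simp_all add: proj_def)

lemma proj_sum: "proj True + proj False = one"
  by (simp add: proj_def)

lemma proj_other: "k \<noteq> i \<Longrightarrow> proj k = one - proj i"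
  by (cases i; cases k) (simp_all add: proj_def)

lemma proj_idem: "m (proj i) (proj i) = proj i"
  by (cases i) (simp_all add: proj_def p_idem mult_diff_left mult_diff_right unit_left unit_right)

lemma star_proj: "st (proj i) = proj i"
  by (cases i) (simp_all add: proj_def star_p star_diff star_one)

lemma proj_mult_left: "m (proj k) (m (proj i) x) = (if k = i then m (proj i) x else 0)"
  using left_alternative[of "proj i" x]
  by (cases "k = i") (simp_all add: proj_idem proj_other mult_diff_left unit_left)

lemma proj_mult_right: "m (m x (proj j)) (proj k) = (if j = k then m x (proj j) else 0)"
  using right_alternative[of x "proj j"]
  by (cases "j = k") (simp_all add: proj_idem proj_other[of k j] mult_diff_right unit_right)

lemma proj_middle: "m (proj i) (m y (proj j)) = m (m (proj i) y) (proj j)"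
  by (cases "i = j") (simp_all add: flexible proj_other[of j i] mult_diff_right unit_right)

lemma comp_comp: "comp k l (comp i j x) = (if k = i \<and> l = j then comp i j x else 0)"
  by (simp add: comp_def proj_middle proj_mult_left proj_mult_right)

lemma comp_star: "st (comp j i x) = comp i j (st x)"
  by (simp add: comp_def star_mult star_proj proj_middle)

lemma comp_add: "comp i j (x + y) = comp i j x + comp i j y"
  by (simp add: comp_def mult_add_left mult_add_right)

lemma comp_diff: "comp i j (x - y) = comp i j x - comp i j y"
  by (simp add: comp_def mult_diff_left mult_diff_right)

lemma comp_scale: "comp i j (smul c x) = smul c (comp i j x)"
  by (simp add: comp_def mult_scale_left mult_scale_right)

lemma comp_signed: "comp i j (signed s x) = signed s (comp i j x)"
  by (simp add: signed_def comp_def mult_minus_left mult_minus_right)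

lemma comp_zero [simp]: "comp i j 0 = 0"
  by (simp add: comp_def)

lemma comp_proj_mult_left: "comp i j (m (proj k) x) = (if i = k then comp i j x else 0)"
  by (simp add: comp_def proj_mult_left)

lemma comp_proj_mult_right: "comp i j (m x (proj k)) = (if j = k then comp i j x else 0)"
  by (simp add: comp_def proj_middle proj_mult_right)

lemma peirce_decomposition:
  "x = comp True True x + comp True False x + comp False True x + comp False False x"
proof -
  have row: "comp i True x + comp i False x = m (proj i) x" for i
    by (simp add: comp_def mult_add_right[symmetric] proj_sum unit_right)
  have "m (proj True) x + m (proj False) x = x"
    by (simp add: mult_add_left[symmetric] proj_sum unit_left)
  then show ?thesis
    using row[of True] row[of False] by (simp add: add.assoc)
qed

lemma comp_eqI:
  assumes "comp True True x = comp True True y" "comp True False x = comp True False y"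
    "comp False True x = comp False True y" "comp False False x = comp False False y"
  shows "x = y"
  using peirce_decomposition[of x] peirce_decomposition[of y] assms by simp

lemma comp_peirce:
  "x \<in> peirce m (proj k) (proj l) \<Longrightarrow> comp i j x = (if i = k \<and> j = l then x else 0)"
  by (auto simp: peirce_def comp_def[symmetric] comp_comp)

lemma comp_peirce_11: "x \<in> peirce m p p \<Longrightarrow> comp i j x = (if i \<and> j then x else 0)"
  using comp_peirce[of x True True] by (simp add: proj_True)

lemma comp_peirce_12: "x \<in> peirce m p (one - p) \<Longrightarrow> comp i j x = (if i \<and> \<not> j then x else 0)"
  using comp_peirce[of x True False] by (simp add: proj_True proj_False)

lemma comp_peirce_21: "x \<in> peirce m (one - p) p \<Longrightarrow> comp i j x = (if \<not> i \<and> j then x else 0)"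
  using comp_peirce[of x False True] by (simp add: proj_True proj_False)

lemma peirce_decomp_complement: "peirce_decomp smul m st one (one - p)"
  using proj_idem[of False] star_proj[of False] unit_left unit_right
  by unfold_locales (simp_all add: proj_False)

lemma comp_star_prod_proj_left:
  "comp i j (star_prod m st s (proj k) y) =
     (if i = k then comp i j y else 0) + signed s (if j = k then comp i j y else 0)"
  by (simp add: star_prod_def star_proj comp_add comp_signed comp_proj_mult_left
      comp_proj_mult_right)

lemma comp_star_prod_proj_right:
  "comp i j (star_prod m st s y (proj k)) =
     (if j = k then comp i j y else 0) + signed s (if i = k then st (comp j i y) else 0)"
  by (simp add: star_prod_def comp_add comp_signed comp_proj_mult_left comp_proj_mult_right
      comp_star)

text \<open>For the minus product the self-adjoint \<open>p\<^sub>1 - p\<^sub>2\<close> would give \<open>y \<mapsto> [p\<^sub>1 - p\<^sub>2, y]\<close>, which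
  kills the diagonal; the factor \<open>\<i>\<close> turns it back into an anticommutator.\<close>

definition grading :: "bool \<Rightarrow> 'a" where
  "grading s = (if s then proj True - proj False else smul \<i> (proj True - proj False))"

lemma comp_star_prod_grading:
  "comp i j (star_prod m st s (grading s) y) =
     smul (if s then 1 else \<i>) (signed i (comp i j y) + signed j (comp i j y))"
proof -
  let ?d = "proj True - proj False"
  have star_d: "st ?d = ?d"
    by (simp add: star_diff star_proj)
  have anticomm: "comp i j (m ?d y + m y ?d) = signed i (comp i j y) + signed j (comp i j y)"
    by (cases i; cases j) (simp_all add: signed_def comp_add comp_diff mult_diff_left
        mult_diff_right comp_proj_mult_left comp_proj_mult_right)
  have "star_prod m st s (grading s) y = smul (if s then 1 else \<i>) (m ?d y + m y ?d)"
  proof (cases s)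
    case True
    then show ?thesis
      by (simp add: star_prod_def grading_def signed_def star_d scale_one)
  next
    case False
    have "m y (st (smul \<i> ?d)) = - smul \<i> (m y ?d)"
      by (simp add: star_scale star_d mult_scale_right mult_minus_right scale_minus_left)
    then show ?thesis
      using False by (simp add: star_prod_def grading_def signed_def mult_scale_left
          scale_add_right)
  qed
  then show ?thesis
    using anticomm by (simp add: comp_scale)
qed

lemma star_prod_grading_offdiag:
  assumes "comp True True y = 0" and "comp False False y = 0"
  shows "star_prod m st s (grading s) y = 0"
  by (rule comp_eqI) (simp_all add: comp_star_prod_grading assms signed_def)

lemma star_prod_grading_cancel_diag:
  assumes "star_prod m st s (grading s) x = star_prod m st s (grading s) y"
  shows "comp i i x = comp i i y"
proof -
  have "smul (if s then 1 else \<i>) (signed i (comp i i x) + signed i (comp i i x)) =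
        smul (if s then 1 else \<i>) (signed i (comp i i y) + signed i (comp i i y))"
    using arg_cong[OF assms, of "comp i i"] by (simp add: comp_star_prod_grading)
  then have "signed i (comp i i x) + signed i (comp i i x) =
             signed i (comp i i y) + signed i (comp i i y)"
    by (rule scale_cancel[rotated]) (simp split: if_splits)
  then show ?thesis
    using double_cancel signed_eq_iff by blast
qed

end

locale star_prod_bijection =
  A: peirce_decomp smulA mA stA oneA p + B: alt_star_algebra smulB mB stB
  for smulA :: "complex \<Rightarrow> 'a::ab_group_add \<Rightarrow> 'a" and mA stA oneA p
    and smulB :: "complex \<Rightarrow> 'b::ab_group_add \<Rightarrow> 'b" and mB stB +
  fixes \<Phi> :: "'a \<Rightarrow> 'b" and s :: bool
  assumes bij: "bij \<Phi>"
    and preserves: "\<And>a b. \<Phi> (star_prod mA stA s a b) = star_prod mB stB s (\<Phi> a) (\<Phi> b)"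
begin

lemma Phi_eq_iff: "\<Phi> x = \<Phi> y \<longleftrightarrow> x = y"
  using bij by (metis bij_is_inj injD)

lemma Phi_zero [simp]: "\<Phi> 0 = 0"
proof -
  obtain z where z: "\<Phi> z = 0"
    using bij by (metis bij_pointE)
  show ?thesis
    using preserves[of 0 z] z by simp
qed

lemma Phi_eq_zero_iff [simp]: "\<Phi> x = 0 \<longleftrightarrow> x = 0"
  using Phi_eq_iff[of x 0] by simp

lemma star_prod_left_sum:
  assumes "\<Phi> t = \<Phi> a + \<Phi> b + \<Phi> c"
  shows "\<Phi> (star_prod mA stA s x t) =
    \<Phi> (star_prod mA stA s x a) + \<Phi> (star_prod mA stA s x b) + \<Phi> (star_prod mA stA s x c)"
  by (simp add: assms preserves B.star_prod_add_right)

lemma star_prod_right_sum: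
  assumes "\<Phi> t = \<Phi> a + \<Phi> b + \<Phi> c"
  shows "\<Phi> (star_prod mA stA s t x) =
    \<Phi> (star_prod mA stA s a x) + \<Phi> (star_prod mA stA s b x) + \<Phi> (star_prod mA stA s c x)"
  by (simp add: assms preserves B.star_prod_add_left)

lemma Phi_add_offdiag:
  assumes "b \<in> peirce mA p (oneA - p)" and "c \<in> peirce mA (oneA - p) p"
  shows "\<Phi> (b + c) = \<Phi> b + \<Phi> c"
proof -
  note hb = A.comp_peirce_12[OF assms(1)] and hc = A.comp_peirce_21[OF assms(2)]
  obtain t where t: "\<Phi> t = \<Phi> b + \<Phi> c + \<Phi> 0"
    using bij by (metis bij_pointE)
  let ?E = "A.grading s"
  have "\<Phi> (star_prod mA stA s ?E t) = \<Phi> (star_prod mA stA s ?E 0)"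
    using star_prod_left_sum[OF t, of ?E] by (simp add: A.star_prod_grading_offdiag hb hc)
  then have diag: "A.comp i i t = 0" for i
    using A.star_prod_grading_cancel_diag[of s t 0 i] by (simp add: Phi_eq_iff)
  \<comment> \<open>Multiply on the right: \<open>p\<^sub>2 \<circ> t\<close> would require the very additivity being proved.\<close>
  have "\<Phi> (star_prod mA stA s t (A.proj True)) = \<Phi> (star_prod mA stA s c (A.proj True))"
  proof -
    have "star_prod mA stA s b (A.proj True) = 0"
      by (rule A.comp_eqI) (simp_all add: A.comp_star_prod_proj_right hb)
    then show ?thesis
      using star_prod_right_sum[OF t, of "A.proj True"] by simp
  qed
  then have "A.comp False True (star_prod mA stA s t (A.proj True)) =
             A.comp False True (star_prod mA stA s c (A.proj True))"
    by (simp add: Phi_eq_iff)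
  then have t21: "A.comp False True t = c"
    by (simp add: A.comp_star_prod_proj_right hc)
  have "\<Phi> (star_prod mA stA s t (A.proj False)) = \<Phi> (star_prod mA stA s b (A.proj False))"
  proof -
    have "star_prod mA stA s c (A.proj False) = 0"
      by (rule A.comp_eqI) (simp_all add: A.comp_star_prod_proj_right hc)
    then show ?thesis
      using star_prod_right_sum[OF t, of "A.proj False"] by simp
  qed
  then have "A.comp True False (star_prod mA stA s t (A.proj False)) =
             A.comp True False (star_prod mA stA s b (A.proj False))"
    by (simp add: Phi_eq_iff)
  then have t12: "A.comp True False t = b"
    by (simp add: A.comp_star_prod_proj_right hb)
  have "t = b + c"
    by (rule A.comp_eqI) (simp_all add: diag t12 t21 A.comp_add hb hc)
  then show ?thesis
    using t by simp
qed

lemma Phi_add_peirce: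
  assumes "a \<in> peirce mA p p" and "b \<in> peirce mA p (oneA - p)" and "c \<in> peirce mA (oneA - p) p"
  shows "\<Phi> (a + b + c) = \<Phi> a + \<Phi> b + \<Phi> c"
proof -
  note ha = A.comp_peirce_11[OF assms(1)] and hb = A.comp_peirce_12[OF assms(2)]
    and hc = A.comp_peirce_21[OF assms(3)]
  obtain t where t: "\<Phi> t = \<Phi> a + \<Phi> b + \<Phi> c"
    using bij by (metis bij_pointE)
  let ?E = "A.grading s" and ?q = "A.proj False"
  have "\<Phi> (star_prod mA stA s ?E t) = \<Phi> (star_prod mA stA s ?E a)"
    using star_prod_left_sum[OF t, of ?E] by (simp add: A.star_prod_grading_offdiag hb hc)
  then have diag: "A.comp i i t = A.comp i i a" for i
    using A.star_prod_grading_cancel_diag[of s t a i] by (simp add: Phi_eq_iff)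
  have "star_prod mA stA s ?q a = 0"
    by (rule A.comp_eqI) (simp_all add: A.comp_star_prod_proj_left ha)
  moreover have "star_prod mA stA s ?q b = signed s b"
    by (rule A.comp_eqI) (simp_all add: A.comp_star_prod_proj_left A.comp_signed hb)
  moreover have "star_prod mA stA s ?q c = c"
    by (rule A.comp_eqI) (simp_all add: A.comp_star_prod_proj_left hc)
  moreover have "\<Phi> (signed s b) + \<Phi> c = \<Phi> (signed s b + c)"
    using Phi_add_offdiag[OF A.peirce_signed[OF assms(2)] assms(3)] by simp
  ultimately have "\<Phi> (star_prod mA stA s ?q t) = \<Phi> (signed s b + c)"
    using star_prod_left_sum[OF t, of ?q] by simp
  then have q_t: "A.comp i j (star_prod mA stA s ?q t) = A.comp i j (signed s b + c)" for i j
    by (simp add: Phi_eq_iff)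
  have t12: "A.comp True False t = b"
    using q_t[of True False] by (simp add: A.comp_star_prod_proj_left A.comp_add A.comp_signed hb hc)
  have t21: "A.comp False True t = c"
    using q_t[of False True] by (simp add: A.comp_star_prod_proj_left A.comp_add A.comp_signed hb hc)
  have "t = a + b + c"
    by (rule A.comp_eqI) (simp_all add: diag t12 t21 A.comp_add ha hb hc)
  then show ?thesis
    using t by simp
qed

end

theorem claim2p3:
  fixes smulA :: "complex \<Rightarrow> 'a::banach \<Rightarrow> 'a"
    and multA :: "'a \<Rightarrow> 'a \<Rightarrow> 'a" and starA :: "'a \<Rightarrow> 'a" and oneA :: 'a
    and smulB :: "complex \<Rightarrow> 'b::ab_group_add \<Rightarrow> 'b"
    and multB :: "'b \<Rightarrow> 'b \<Rightarrow> 'b" and starB :: "'b \<Rightarrow> 'b"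
    and \<Phi> :: "'a \<Rightarrow> 'b" and p1 p2 :: 'a
  assumes A: "alt_Wstar_factor smulA multA starA oneA"
    and B: "alt_star_alg smulB multB starB"
    and bij: "bij \<Phi>"
    and pres: "preserves_plus multA starA multB starB \<Phi> \<or> preserves_minus multA starA multB starB \<Phi>"
    and p1: "is_projection multA starA p1" and p1_ne: "p1 \<noteq> oneA"
    and p2: "p2 = oneA - p1"
  shows "\<forall>a11\<in>peirce multA p1 p1. \<forall>b12\<in>peirce multA p1 p2.
           \<forall>c21\<in>peirce multA p2 p1. \<forall>d22\<in>peirce multA p2 p2.
             \<Phi> (a11 + b12 + c21) = \<Phi> a11 + \<Phi> b12 + \<Phi> c21 \<and>
             \<Phi> (b12 + c21 + d22) = \<Phi> b12 + \<Phi> c21 + \<Phi> d22"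
proof -
  interpret A1: peirce_decomp smulA multA starA oneA p1
    using A p1 by unfold_locales
      (auto simp: alt_Wstar_factor_def alt_Cstar_alg_def is_unit_def is_projection_def)
  interpret A2: peirce_decomp smulA multA starA oneA p2
    unfolding p2 by (rule A1.peirce_decomp_complement)
  obtain s where pres_s: "\<And>a b. \<Phi> (star_prod multA starA s a b) = star_prod multB starB s (\<Phi> a) (\<Phi> b)"
    using pres by (auto simp: preserves_plus_iff_star_prod preserves_minus_iff_star_prod)
  interpret S1: star_prod_bijection smulA multA starA oneA p1 smulB multB starB \<Phi> s
    using B bij pres_s by unfold_locales (simp_all add: alt_star_algebra_def)
  interpret S2: star_prod_bijection smulA multA starA oneA p2 smulB multB starB \<Phi> s
    using B bij pres_s by unfold_locales (simp_all add: alt_star_algebra_def)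
  have p1_compl: "oneA - p2 = p1"
    using p2 by simp
  show ?thesis
  proof (intro ballI conjI)
    fix a b c d
    assume a: "a \<in> peirce multA p1 p1" and b: "b \<in> peirce multA p1 p2"
      and c: "c \<in> peirce multA p2 p1" and d: "d \<in> peirce multA p2 p2"
    show "\<Phi> (a + b + c) = \<Phi> a + \<Phi> b + \<Phi> c"
      using S1.Phi_add_peirce[OF a] b c p2 by simp
    have "\<Phi> (d + c + b) = \<Phi> d + \<Phi> c + \<Phi> b"
      using S2.Phi_add_peirce[OF d] c b p1_compl by simp
    then show "\<Phi> (b + c + d) = \<Phi> b + \<Phi> c + \<Phi> d"
      by (simp add: ac_simps)
  qed
qed

end
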